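(* Let $\mathbb{F}$ be any field. There exists a non-zero polynomial $Q \in \mathbb{F}[x_{1,1, 1}, \ldots, x_{n,n, n}]$ of degree at most $n^4$ such that $Q(\tau)=0$ for every three-dimensional tensor $\tau:[n]\times [n] \times [n] \to \mathbb{F}$ of rank at most $n^2/300$.
   Context: The rank of a tensor $\tau:[n]^3\to\mathbb{F}$ is the least $r$ such that $\tau=\sum_{i=1}^r u_i\otimes v_i\otimes w_i$ with $u_i,v_i,w_i\in\mathbb{F}^n$. $Q(\tau)$ denotes evaluation at $x_{i,j,k}=\tau(i,j,k)$. *)

theory Defs
  imports Complex_Main "HOL-Library.Poly_Mapping"
begin

text \<open>Tensors on [n]^3 (indices 0..n-1) are functions on nat triples; only values
on {0..<n}^3 matter. Multivariate polynomials in variables x_{i,j,k} are represented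
as finitely supported maps from monomials (finitely supported exponent maps on the
variable triples) to coefficients.\<close>

type_synonym 'a tpoly = "((nat \<times> nat \<times> nat) \<Rightarrow>\<^sub>0 nat) \<Rightarrow>\<^sub>0 'a"

definition cube :: "nat \<Rightarrow> (nat \<times> nat \<times> nat) set" where
  "cube n = {0..<n} \<times> {0..<n} \<times> {0..<n}"

definition tpoly_in_vars :: "nat \<Rightarrow> 'a::zero tpoly \<Rightarrow> bool" where
  "tpoly_in_vars n Q \<longleftrightarrow> (\<forall>m \<in> Poly_Mapping.keys Q. Poly_Mapping.keys m \<subseteq> cube n)"

definition monomial_degree :: "((nat \<times> nat \<times> nat) \<Rightarrow>\<^sub>0 nat) \<Rightarrow> nat" where
  "monomial_degree m = (\<Sum>x\<in>Poly_Mapping.keys m. Poly_Mapping.lookup m x)"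

definition tpoly_degree :: "'a::zero tpoly \<Rightarrow> nat" where
  "tpoly_degree Q = Max (insert 0 (monomial_degree ` Poly_Mapping.keys Q))"

definition tpoly_eval :: "'a::comm_ring_1 tpoly \<Rightarrow> (nat \<times> nat \<times> nat \<Rightarrow> 'a) \<Rightarrow> 'a" where
  "tpoly_eval Q \<tau> = (\<Sum>m\<in>Poly_Mapping.keys Q. Poly_Mapping.lookup Q m * (\<Prod>x\<in>Poly_Mapping.keys m. \<tau> x ^ Poly_Mapping.lookup m x))"

definition has_rank_decomp :: "nat \<Rightarrow> (nat \<times> nat \<times> nat \<Rightarrow> 'a::comm_ring_1) \<Rightarrow> nat \<Rightarrow> bool" where
  "has_rank_decomp n \<tau> r \<longleftrightarrow>
     (\<exists>u v w :: nat \<Rightarrow> nat \<Rightarrow> 'a. \<forall>i<n. \<forall>j<n. \<forall>k<n.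
        \<tau> (i, j, k) = (\<Sum>l<r. u l i * v l j * w l k))"

definition tensor_rank :: "nat \<Rightarrow> (nat \<times> nat \<times> nat \<Rightarrow> 'a::comm_ring_1) \<Rightarrow> nat" where
  "tensor_rank n \<tau> = (LEAST r. has_rank_decomp n \<tau> r)"

end

theory Submission
  imports Defs "HOL-Library.Function_Algebras" "HOL-Library.FuncSet"
begin

text \<open>A tensor of rank at most R is a value of the map sending 3Rn parameters (the entries
of the vectors u_l, v_l, w_l) to the sum of the R rank-one tensors u_l \<otimes> v_l \<otimes> w_l; every
coordinate of this map is a cubic polynomial in the parameters. Pulling back the (n+1)^(n^3)
monomials in the tensor coordinates with all exponents at most n along this map yields
polynomial functions in the parameters with all exponents at most 3n^4. These lie in the span
of at most (3n^4+1)^(3Rn) monomial functions, which is fewer than (n+1)^(n^3) when 300R \<le> n^2.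
Hence the pulled-back monomials satisfy a nontrivial linear relation, and its coefficients
form Q, of degree at most n \<cdot> n^3. The dimension bound only counts spanning monomials, so it
holds for polynomial functions as well as for formal polynomials, and finite fields need no
separate treatment.\<close>

definition fun_scale :: "'a::field \<Rightarrow> ('p \<Rightarrow> 'a) \<Rightarrow> 'p \<Rightarrow> 'a" where
  "fun_scale c f = (\<lambda>x. c * f x)"

interpretation fun_vs: vector_space fun_scale
  by unfold_locales (auto simp: fun_scale_def fun_eq_iff algebra_simps)

lemma sum_fun_apply: "(\<Sum>v\<in>A. f v) x = (\<Sum>v\<in>A. f v x)"
  by (induction A rule: infinite_finite_induct) auto

lemma (in vector_space) nontrivial_linear_relation:
  assumes "finite I" "finite T" "f ` I \<subseteq> span T" "card T < card I"
  shows "\<exists>c. (\<exists>i\<in>I. c i \<noteq> 0) \<and> (\<Sum>i\<in>I. c i *s f i) = 0"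
proof (cases "inj_on f I")
  case True
  have "dependent (f ` I)"
  proof (rule ccontr)
    assume "\<not> dependent (f ` I)"
    then have "card (f ` I) \<le> card T" using independent_span_bound assms(2,3) by blast
    then show False using assms(4) card_image[OF True] by simp
  qed
  then obtain u where u: "\<exists>v\<in>f ` I. u v \<noteq> 0" "(\<Sum>v\<in>f ` I. u v *s v) = 0"
    using dependent_finite[of "f ` I"] assms(1) by auto
  then have "(\<exists>i\<in>I. u (f i) \<noteq> 0) \<and> (\<Sum>i\<in>I. u (f i) *s f i) = 0"
    by (simp add: sum.reindex[OF True])
  then show ?thesis by (rule exI[of _ "\<lambda>i. u (f i)"])
next
  case False
  then obtain i j where ij: "i \<in> I" "j \<in> I" "i \<noteq> j" "f i = f j"
    unfolding inj_on_def by blast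
  define c where "c k = (if k = i then 1 else if k = j then -1 else (0 :: 'a))" for k
  have "(\<Sum>k\<in>I. c k *s f k) = (\<Sum>k\<in>{i, j}. c k *s f k)"
    by (rule sum.mono_neutral_right) (use assms(1) ij in \<open>auto simp: c_def\<close>)
  also have "\<dots> = 0"
    using ij by (simp add: c_def)
  finally show ?thesis
    using ij(1) by (intro exI[of _ c]) (auto simp: c_def)
qed

lemma span_mult_left:
  fixes a g :: "'p \<Rightarrow> 'a::field"
  assumes "\<And>b. b \<in> B \<Longrightarrow> (\<lambda>x. a x * b x) \<in> fun_vs.span C" and "g \<in> fun_vs.span B"
  shows "(\<lambda>x. a x * g x) \<in> fun_vs.span C"
  using assms(2)
proof (induction rule: fun_vs.span_induct_alt)
  case base
  then show ?case using fun_vs.span_zero by (simp add: zero_fun_def)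
next
  case (step c b h)
  have "(\<lambda>x. a x * (fun_scale c b + h) x) = fun_scale c (\<lambda>x. a x * b x) + (\<lambda>x. a x * h x)"
    by (auto simp: fun_scale_def fun_eq_iff algebra_simps)
  then show ?case
    using assms(1)[OF step(1)] step(2) by (simp only:) (intro fun_vs.span_add fun_vs.span_scale)
qed

lemma span_mult:
  fixes f g :: "'p \<Rightarrow> 'a::field"
  assumes "\<And>a b. a \<in> A \<Longrightarrow> b \<in> B \<Longrightarrow> (\<lambda>x. a x * b x) \<in> fun_vs.span C"
    and "f \<in> fun_vs.span A" and "g \<in> fun_vs.span B"
  shows "(\<lambda>x. f x * g x) \<in> fun_vs.span C"
proof -
  have "(\<lambda>x. a x * g x) \<in> fun_vs.span C" if "a \<in> A" for a
    by (rule span_mult_left) (use assms(1,3) that in auto)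
  then have "(\<lambda>x. g x * a x) \<in> fun_vs.span C" if "a \<in> A" for a
    using that by (simp add: mult.commute)
  then show ?thesis
    using span_mult_left[of A g C f] assms(2) by (simp add: mult.commute)
qed

definition monomial_fun :: "'p set \<Rightarrow> ('p \<Rightarrow> nat) \<Rightarrow> ('p \<Rightarrow> 'a::field) \<Rightarrow> 'a" where
  "monomial_fun Y \<beta> = (\<lambda>p. \<Prod>y\<in>Y. p y ^ \<beta> y)"

definition poly_funs :: "'p set \<Rightarrow> nat \<Rightarrow> (('p \<Rightarrow> 'a::field) \<Rightarrow> 'a) set" where
  "poly_funs Y d = fun_vs.span (monomial_fun Y ` (Y \<rightarrow>\<^sub>E {..d}))"

lemma card_monomial_funs_le:
  assumes "finite Y"
  shows "card (monomial_fun Y ` (Y \<rightarrow>\<^sub>E {..d})) \<le> (d + 1) ^ card Y"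
proof -
  have "card (monomial_fun Y ` (Y \<rightarrow>\<^sub>E {..d})) \<le> card (Y \<rightarrow>\<^sub>E {..d})"
    by (rule card_image_le) (simp add: assms finite_PiE)
  also have "\<dots> = (d + 1) ^ card Y"
    using assms by (simp add: card_PiE)
  finally show ?thesis .
qed

lemma poly_funs_mono: "d \<le> e \<Longrightarrow> poly_funs Y d \<subseteq> poly_funs Y e"
  unfolding poly_funs_def by (intro fun_vs.span_mono image_mono PiE_mono) auto

lemma monomial_fun_in_poly_funs:
  assumes "\<And>y. y \<in> Y \<Longrightarrow> \<beta> y \<le> d"
  shows "monomial_fun Y \<beta> \<in> poly_funs Y d"
proof -
  have "monomial_fun Y \<beta> = monomial_fun Y (restrict \<beta> Y)"
    by (auto simp: monomial_fun_def intro!: prod.cong)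
  moreover have "restrict \<beta> Y \<in> Y \<rightarrow>\<^sub>E {..d}"
    using assms by auto
  ultimately have "monomial_fun Y \<beta> \<in> monomial_fun Y ` (Y \<rightarrow>\<^sub>E {..d})"
    by (rule image_eqI)
  then show ?thesis
    unfolding poly_funs_def by (rule fun_vs.span_base)
qed

lemma poly_funs_one: "(\<lambda>p. 1) \<in> poly_funs Y d"
  using monomial_fun_in_poly_funs[of Y "\<lambda>_. 0" d] by (simp add: monomial_fun_def)

lemma poly_funs_var:
  assumes "finite Y" "y \<in> Y" "1 \<le> d"
  shows "(\<lambda>p. p y) \<in> poly_funs Y d"
proof -
  have "(\<lambda>p. p y) = monomial_fun Y (\<lambda>z. if z = y then 1 else 0)"
    using assms(1,2)
    by (simp add: monomial_fun_def if_distrib[of "\<lambda>e. _ ^ e"] prod.delta cong: if_cong)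
  also have "\<dots> \<in> poly_funs Y d"
    by (rule monomial_fun_in_poly_funs) (use assms(3) in auto)
  finally show ?thesis .
qed

lemma poly_funs_mult:
  assumes "f \<in> poly_funs Y d" "g \<in> poly_funs Y e"
  shows "(\<lambda>p. f p * g p) \<in> poly_funs Y (d + e)"
proof -
  have "(\<lambda>p. a p * b p) \<in> poly_funs Y (d + e)"
    if ab: "a \<in> monomial_fun Y ` (Y \<rightarrow>\<^sub>E {..d})" "b \<in> monomial_fun Y ` (Y \<rightarrow>\<^sub>E {..e})" for a b
  proof -
    obtain \<beta> \<gamma> where \<beta>: "\<beta> \<in> Y \<rightarrow>\<^sub>E {..d}" "a = monomial_fun Y \<beta>"
      and \<gamma>: "\<gamma> \<in> Y \<rightarrow>\<^sub>E {..e}" "b = monomial_fun Y \<gamma>"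
      using ab by blast
    have "(\<lambda>p. a p * b p) = monomial_fun Y (\<lambda>y. \<beta> y + \<gamma> y)"
      by (simp add: \<beta>(2) \<gamma>(2) monomial_fun_def fun_eq_iff power_add prod.distrib)
    moreover have "monomial_fun Y (\<lambda>y. \<beta> y + \<gamma> y) \<in> poly_funs Y (d + e)"
      by (rule monomial_fun_in_poly_funs) (use \<beta>(1) \<gamma>(1) in \<open>auto intro: add_mono\<close>)
    ultimately show ?thesis by simp
  qed
  then show ?thesis
    using assms unfolding poly_funs_def by (rule span_mult)
qed

lemma poly_funs_sum:
  assumes "\<And>i. i \<in> I \<Longrightarrow> f i \<in> poly_funs Y d"
  shows "(\<lambda>p. \<Sum>i\<in>I. f i p) \<in> poly_funs Y d"
proof -
  have "(\<lambda>p. \<Sum>i\<in>I. f i p) = (\<Sum>i\<in>I. f i)"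
    by (auto simp: sum_fun_apply)
  then show ?thesis
    using assms unfolding poly_funs_def by (auto intro!: fun_vs.span_sum)
qed

lemma poly_funs_power:
  assumes "f \<in> poly_funs Y d"
  shows "(\<lambda>p. f p ^ e) \<in> poly_funs Y (d * e)"
proof (induction e)
  case 0
  then show ?case using poly_funs_one by simp
next
  case (Suc e)
  then have "(\<lambda>p. f p * f p ^ e) \<in> poly_funs Y (d + d * e)"
    by (intro poly_funs_mult assms)
  then show ?case by simp
qed

lemma poly_funs_prod:
  assumes "finite K" "\<And>k. k \<in> K \<Longrightarrow> f k \<in> poly_funs Y (d k)"
  shows "(\<lambda>p. \<Prod>k\<in>K. f k p) \<in> poly_funs Y (\<Sum>k\<in>K. d k)"
  using assms
proof (induction K rule: finite_induct)
  case empty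
  then show ?case using poly_funs_one by simp
next
  case (insert a K)
  then have "(\<lambda>p. f a p * (\<Prod>k\<in>K. f k p)) \<in> poly_funs Y (d a + (\<Sum>k\<in>K. d k))"
    by (intro poly_funs_mult) auto
  then show ?case
    using insert.hyps by simp
qed

text \<open>Parameter (t, l, i) is the i-th entry of u_l, v_l or w_l for t = 0, 1, 2.\<close>

definition param_vars :: "nat \<Rightarrow> nat \<Rightarrow> (nat \<times> nat \<times> nat) set" where
  "param_vars R n = {..<3} \<times> {..<R} \<times> {..<n}"

definition rank_param :: "nat \<Rightarrow> (nat \<times> nat \<times> nat \<Rightarrow> 'a::comm_ring_1) \<Rightarrow> nat \<times> nat \<times> nat \<Rightarrow> 'a" where
  "rank_param R p = (\<lambda>(i, j, k). \<Sum>l<R. p (0, l, i) * p (1, l, j) * p (2, l, k))"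

lemma rank_param_apply:
  "rank_param R p (i, j, k) = (\<Sum>l<R. p (0, l, i) * p (1, l, j) * p (2, l, k))"
  by (simp add: rank_param_def)

lemma finite_param_vars: "finite (param_vars R n)"
  by (simp add: param_vars_def)

lemma card_param_vars: "card (param_vars R n) = 3 * R * n"
  by (simp add: param_vars_def card_cartesian_product)

lemma rank_param_in_poly_funs:
  assumes "x \<in> cube n"
  shows "(\<lambda>p. rank_param R p x :: 'a::field) \<in> poly_funs (param_vars R n) 3"
proof -
  obtain i j k where x: "x = (i, j, k)" "i < n" "j < n" "k < n"
    using assms by (auto simp: cube_def)
  have "(\<lambda>p. p (0, l, i) * p (1, l, j) * p (2, l, k) :: 'a) \<in> poly_funs (param_vars R n) (1 + 1 + 1)"
    if "l < R" for l
    using that x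
    by (intro poly_funs_mult poly_funs_var) (auto simp: finite_param_vars param_vars_def)
  then show ?thesis
    by (auto simp: rank_param_apply x numeral_3_eq_3 intro!: poly_funs_sum)
qed

definition monomial_eval :: "((nat \<times> nat \<times> nat) \<Rightarrow>\<^sub>0 nat) \<Rightarrow> (nat \<times> nat \<times> nat \<Rightarrow> 'a::comm_ring_1) \<Rightarrow> 'a" where
  "monomial_eval m \<tau> = (\<Prod>x\<in>Poly_Mapping.keys m. \<tau> x ^ Poly_Mapping.lookup m x)"

lemma monomial_eval_rank_param_in_poly_funs:
  assumes "Poly_Mapping.keys m \<subseteq> cube n"
  shows "(\<lambda>p. monomial_eval m (rank_param R p) :: 'a::field)
           \<in> poly_funs (param_vars R n) (3 * monomial_degree m)"
proof -
  have "(\<lambda>p. \<Prod>x\<in>Poly_Mapping.keys m. rank_param R p x ^ Poly_Mapping.lookup m x :: 'a)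
      \<in> poly_funs (param_vars R n) (\<Sum>x\<in>Poly_Mapping.keys m. 3 * Poly_Mapping.lookup m x)"
    using assms by (intro poly_funs_prod poly_funs_power rank_param_in_poly_funs) auto
  then show ?thesis
    by (simp add: monomial_eval_def monomial_degree_def sum_distrib_left)
qed

definition cube_monomial :: "nat \<Rightarrow> (nat \<times> nat \<times> nat \<Rightarrow> nat) \<Rightarrow> (nat \<times> nat \<times> nat) \<Rightarrow>\<^sub>0 nat" where
  "cube_monomial n f = Abs_poly_mapping (\<lambda>x. if x \<in> cube n then f x else 0)"

definition cube_monomials :: "nat \<Rightarrow> ((nat \<times> nat \<times> nat) \<Rightarrow>\<^sub>0 nat) set" where
  "cube_monomials n = cube_monomial n ` (cube n \<rightarrow>\<^sub>E {..n})"

lemma finite_cube: "finite (cube n)"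
  by (simp add: cube_def)

lemma card_cube: "card (cube n) = n ^ 3"
  by (simp add: cube_def card_cartesian_product power3_eq_cube)

lemma lookup_cube_monomial:
  "Poly_Mapping.lookup (cube_monomial n f) = (\<lambda>x. if x \<in> cube n then f x else 0)"
proof -
  have "finite {x. (if x \<in> cube n then f x else 0) \<noteq> 0}"
    by (rule finite_subset[OF _ finite_cube[of n]]) (auto split: if_splits)
  then show ?thesis by (simp add: cube_monomial_def)
qed

lemma inj_on_cube_monomial: "inj_on (cube_monomial n) (cube n \<rightarrow>\<^sub>E {..n})"
proof (rule inj_onI)
  fix f g
  assume f: "f \<in> cube n \<rightarrow>\<^sub>E {..n}" and g: "g \<in> cube n \<rightarrow>\<^sub>E {..n}"
    and eq: "cube_monomial n f = cube_monomial n g"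
  have "f x = g x" if "x \<in> cube n" for x
    using arg_cong[OF eq, of "\<lambda>m. Poly_Mapping.lookup m x"] that by (simp add: lookup_cube_monomial)
  with f g show "f = g"
    by (intro PiE_ext)
qed

lemma finite_cube_monomials: "finite (cube_monomials n)"
  by (simp add: cube_monomials_def finite_PiE finite_cube)

lemma card_cube_monomials: "card (cube_monomials n) = (n + 1) ^ (n ^ 3)"
  by (simp add: cube_monomials_def card_image[OF inj_on_cube_monomial] card_PiE finite_cube card_cube)

lemma keys_subset_cube_if_cube_monomials:
  "m \<in> cube_monomials n \<Longrightarrow> Poly_Mapping.keys m \<subseteq> cube n"
  by (auto simp: cube_monomials_def in_keys_iff lookup_cube_monomial split: if_splits)

lemma monomial_degree_le_if_cube_monomials:
  assumes "m \<in> cube_monomials n"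
  shows "monomial_degree m \<le> n ^ 4"
proof -
  obtain f where f: "f \<in> cube n \<rightarrow>\<^sub>E {..n}" "m = cube_monomial n f"
    using assms by (auto simp: cube_monomials_def)
  have "monomial_degree m \<le> (\<Sum>x\<in>cube n. Poly_Mapping.lookup m x)"
    unfolding monomial_degree_def
    by (rule sum_mono2[OF finite_cube keys_subset_cube_if_cube_monomials[OF assms]]) simp
  also have "\<dots> \<le> (\<Sum>x\<in>cube n. n)"
    by (rule sum_mono) (use f in \<open>auto simp: lookup_cube_monomial\<close>)
  also have "\<dots> = n ^ 4"
    by (simp add: card_cube power_numeral_reduce)
  finally show ?thesis .
qed

definition tpoly_of :: "((nat \<times> nat \<times> nat) \<Rightarrow>\<^sub>0 nat) set \<Rightarrow> (((nat \<times> nat \<times> nat) \<Rightarrow>\<^sub>0 nat) \<Rightarrow> 'a::zero) \<Rightarrow> 'a tpoly" where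
  "tpoly_of S c = Abs_poly_mapping (\<lambda>m. if m \<in> S then c m else 0)"

lemma lookup_tpoly_of:
  assumes "finite S"
  shows "Poly_Mapping.lookup (tpoly_of S c) = (\<lambda>m. if m \<in> S then c m else 0)"
proof -
  have "finite {m. (if m \<in> S then c m else 0) \<noteq> 0}"
    by (rule finite_subset[OF _ assms]) (auto split: if_splits)
  then show ?thesis by (simp add: tpoly_of_def)
qed

lemma keys_tpoly_of_subset: "finite S \<Longrightarrow> Poly_Mapping.keys (tpoly_of S c) \<subseteq> S"
  by (auto simp: in_keys_iff lookup_tpoly_of split: if_splits)

lemma tpoly_of_eq_zero_iff: "finite S \<Longrightarrow> tpoly_of S c = 0 \<longleftrightarrow> (\<forall>m\<in>S. c m = 0)"
  by (auto simp: poly_mapping_eq_iff lookup_tpoly_of fun_eq_iff)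

lemma tpoly_eval_tpoly_of:
  assumes "finite S"
  shows "tpoly_eval (tpoly_of S c) \<tau> = (\<Sum>m\<in>S. c m * monomial_eval m \<tau>)"
  unfolding tpoly_eval_def monomial_eval_def[symmetric]
  by (rule sum.mono_neutral_cong_left[OF assms keys_tpoly_of_subset[OF assms]])
     (auto simp: in_keys_iff lookup_tpoly_of assms)

lemma tpoly_eval_cong:
  assumes "tpoly_in_vars n Q" "\<forall>x\<in>cube n. \<tau> x = \<sigma> x"
  shows "tpoly_eval Q \<tau> = tpoly_eval Q \<sigma>"
  using assms unfolding tpoly_eval_def tpoly_in_vars_def
  by (intro sum.cong refl arg_cong2[where f = "(*)"] prod.cong) (auto dest!: subsetD)

lemma has_rank_decomp_square: "has_rank_decomp n \<tau> (n * n)"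
  unfolding has_rank_decomp_def
proof (intro exI allI impI)
  fix i j k
  assume ijk: "i < n" "j < n" "k < n"
  let ?u = "\<lambda>l i. \<tau> (i, l div n, l mod n)"
  let ?v = "\<lambda>l j. if j = l div n then 1 else 0"
  let ?w = "\<lambda>l k. if k = l mod n then 1 else 0"
  have "?u l i * ?v l j * ?w l k = (if l = j * n + k then \<tau> (i, j, k) else 0)" for l
  proof (cases "l = j * n + k")
    case True
    then show ?thesis using ijk(3) by simp
  next
    case False
    then have "\<not> (j = l div n \<and> k = l mod n)" by auto
    then show ?thesis using False by auto
  qed
  moreover have "j * n + k < n * n"
  proof -
    have "j * n + k < (j + 1) * n" using ijk(3) by simp
    also have "\<dots> \<le> n * n" using ijk(2) by (intro mult_right_mono) auto
    finally show ?thesis .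
  qed
  ultimately show "\<tau> (i, j, k) = (\<Sum>l<n * n. ?u l i * ?v l j * ?w l k)"
    by (simp add: sum.delta')
qed

lemma tensor_rank_le_imp_rank_param:
  assumes "tensor_rank n \<tau> \<le> R"
  obtains p where "\<forall>x\<in>cube n. \<tau> x = rank_param R p x"
proof -
  let ?r = "tensor_rank n \<tau>"
  have "has_rank_decomp n \<tau> ?r"
    unfolding tensor_rank_def by (rule LeastI[of "has_rank_decomp n \<tau>", OF has_rank_decomp_square])
  then obtain u v w where d: "\<forall>i<n. \<forall>j<n. \<forall>k<n. \<tau> (i, j, k) = (\<Sum>l<?r. u l i * v l j * w l k)"
    unfolding has_rank_decomp_def by blast
  define p where "p = (\<lambda>(t :: nat, l, i). if l < ?r then (if t = 0 then u l i else if t = 1 then v l i else w l i) else 0)"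
  have "\<tau> (i, j, k) = rank_param R p (i, j, k)" if "i < n" "j < n" "k < n" for i j k
  proof -
    have "rank_param R p (i, j, k) = (\<Sum>l<?r. p (0, l, i) * p (1, l, j) * p (2, l, k))"
      unfolding rank_param_apply
      by (rule sum.mono_neutral_right) (use assms in \<open>auto simp: p_def\<close>)
    also have "\<dots> = (\<Sum>l<?r. u l i * v l j * w l k)"
      by (rule sum.cong) (auto simp: p_def)
    finally show ?thesis using d that by simp
  qed
  then show thesis
    by (intro that) (auto simp: cube_def)
qed

lemma dimension_count_lt:
  fixes n R :: nat
  assumes "n \<ge> 1" "300 * R \<le> n ^ 2"
  shows "(3 * n ^ 4 + 1) ^ (3 * R * n) < (n + 1) ^ (n ^ 3)"
proof -
  have "(n + 1) ^ 5 = n^5 + 5*n^4 + 10*n^3 + 10*n^2 + 5*n + 1"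
    by (simp add: power_numeral_reduce algebra_simps)
  then have "(3 * n ^ 4 + 1) ^ (3 * R * n) \<le> ((n + 1) ^ 5) ^ (3 * R * n)"
    by (intro power_mono) simp_all
  also have "\<dots> = (n + 1) ^ (15 * R * n)"
    by (simp flip: power_mult add: mult.assoc)
  also have "\<dots> < (n + 1) ^ (n ^ 3)"
  proof (rule power_strict_increasing)
    have "300 * (R * n) \<le> n ^ 3"
      using mult_le_mono1[OF assms(2), of n] by (simp add: power_numeral_reduce mult.assoc)
    moreover have "n ^ 3 \<ge> 1"
      using assms(1) by simp
    ultimately show "15 * R * n < n ^ 3"
      by linarith
  qed (use assms in auto)
  finally show ?thesis .
qed

lemma linear_relation_on_rank_param:
  fixes n R :: nat
  assumes "n \<ge> 1" "300 * R \<le> n ^ 2"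
  obtains c :: "((nat \<times> nat \<times> nat) \<Rightarrow>\<^sub>0 nat) \<Rightarrow> 'a::field"
  where "\<exists>m\<in>cube_monomials n. c m \<noteq> 0"
    and "\<And>p. (\<Sum>m\<in>cube_monomials n. c m * monomial_eval m (rank_param R p)) = 0"
proof -
  let ?S = "cube_monomials n"
  let ?T = "monomial_fun (param_vars R n) ` (param_vars R n \<rightarrow>\<^sub>E {..3 * n ^ 4})"
  let ?f = "\<lambda>m p. monomial_eval m (rank_param R p) :: 'a"
  have "?f m \<in> fun_vs.span ?T" if "m \<in> ?S" for m
    using monomial_eval_rank_param_in_poly_funs[OF keys_subset_cube_if_cube_monomials[OF that]]
      poly_funs_mono[of "3 * monomial_degree m" "3 * n ^ 4"]
      monomial_degree_le_if_cube_monomials[OF that]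
    unfolding poly_funs_def by auto
  moreover have "card ?T < card ?S"
  proof -
    have "card ?T \<le> (3 * n ^ 4 + 1) ^ (3 * R * n)"
      using card_monomial_funs_le[OF finite_param_vars] by (simp add: card_param_vars)
    also have "\<dots> < (n + 1) ^ (n ^ 3)"
      by (rule dimension_count_lt[OF assms])
    also have "\<dots> = card ?S"
      by (simp add: card_cube_monomials)
    finally show ?thesis .
  qed
  moreover have "finite ?T"
    by (simp add: finite_PiE finite_param_vars)
  ultimately obtain c where c: "\<exists>m\<in>?S. c m \<noteq> 0" "(\<Sum>m\<in>?S. fun_scale (c m) (?f m)) = 0"
    using fun_vs.nontrivial_linear_relation[OF finite_cube_monomials, of ?T ?f] by blast
  moreover have "(\<Sum>m\<in>?S. c m * ?f m p) = 0" for p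
    using fun_cong[OF c(2), of p] by (simp add: sum_fun_apply fun_scale_def)
  ultimately show thesis
    using that by blast
qed

lemma exists_tpoly_vanishing_on_rank_param:
  fixes n R :: nat
  assumes "n \<ge> 1" "300 * R \<le> n ^ 2"
  shows "\<exists>Q :: 'a::field tpoly. Q \<noteq> 0 \<and> tpoly_in_vars n Q \<and> tpoly_degree Q \<le> n ^ 4 \<and>
           (\<forall>p. tpoly_eval Q (rank_param R p) = 0)"
proof -
  obtain c :: "_ \<Rightarrow> 'a" where c: "\<exists>m\<in>cube_monomials n. c m \<noteq> 0"
    and relation: "\<And>p. (\<Sum>m\<in>cube_monomials n. c m * monomial_eval m (rank_param R p)) = 0"
    using linear_relation_on_rank_param[OF assms] by blast
  define Q where "Q = tpoly_of (cube_monomials n) c"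
  have keys_Q: "Poly_Mapping.keys Q \<subseteq> cube_monomials n"
    unfolding Q_def by (rule keys_tpoly_of_subset[OF finite_cube_monomials])
  have "Q \<noteq> 0"
    using c by (simp add: Q_def tpoly_of_eq_zero_iff finite_cube_monomials)
  moreover have "tpoly_in_vars n Q"
    using keys_Q keys_subset_cube_if_cube_monomials by (auto simp: tpoly_in_vars_def)
  moreover have "tpoly_degree Q \<le> n ^ 4"
    using keys_Q monomial_degree_le_if_cube_monomials by (auto simp: tpoly_degree_def)
  moreover have "tpoly_eval Q (rank_param R p) = 0" for p
    using relation by (simp add: Q_def tpoly_eval_tpoly_of finite_cube_monomials)
  ultimately show ?thesis by blast
qed

theorem theorem4p2:
  fixes n :: nat
  assumes "n \<ge> 1"
  shows "\<exists>Q :: 'a::field tpoly. Q \<noteq> 0 \<and> tpoly_in_vars n Q \<and> tpoly_degree Q \<le> n ^ 4 \<and>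
           (\<forall>\<tau> :: nat \<times> nat \<times> nat \<Rightarrow> 'a. real (tensor_rank n \<tau>) \<le> real n ^ 2 / 300
              \<longrightarrow> tpoly_eval Q \<tau> = 0)"
proof -
  define R where "R = n ^ 2 div 300"
  obtain Q :: "'a tpoly" where Q: "Q \<noteq> 0" "tpoly_in_vars n Q" "tpoly_degree Q \<le> n ^ 4"
    and vanishes: "\<And>p. tpoly_eval Q (rank_param R p) = 0"
    using exists_tpoly_vanishing_on_rank_param[OF assms, of R] unfolding R_def by auto
  have "tpoly_eval Q \<tau> = 0" if "real (tensor_rank n \<tau>) \<le> real n ^ 2 / 300" for \<tau>
  proof -
    have "300 * tensor_rank n \<tau> \<le> n ^ 2"
      using that by (simp add: field_simps flip: of_nat_mult of_nat_power of_nat_le_iff)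
    then have "tensor_rank n \<tau> \<le> R"
      unfolding R_def by (simp add: less_eq_div_iff_mult_less_eq mult.commute)
    then obtain p where "\<forall>x\<in>cube n. \<tau> x = rank_param R p x"
      by (rule tensor_rank_le_imp_rank_param)
    then show ?thesis
      using tpoly_eval_cong[OF Q(2)] vanishes by metis
  qed
  then show ?thesis using Q by blast
qed

end
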